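(* Let $L$ be a consistent pretransitive logic and $k\le\omega$. Then the $k$-canonical frame of $L$ is $1$-heavy: for every point $x$ of depth greater than $1$ there is $y$ with $xR^*y$ and the depth of $y$ equal to $1$.
   Context: Logics are normal $n$-modal logics; a $k$-formula uses only $p_j$, $j<k$. $L$ is pretransitive if $L\vdash\Diamond^{m+1}p\to\Diamond^{\le m}p$ for some $m$, where $\Diamond^0\varphi=\varphi$, $\Diamond^{i+1}\varphi=\Diamond^i(\bigvee_{j<n}\Diamond_j\varphi)$, $\Diamond^{\le m}\varphi=\bigvee_{i\le m}\Diamond^i\varphi$. The $k$-canonical frame has points the maximal $L$-consistent sets of $k$-formulas, $xR_iy$ iff $\Diamond_i\psi\in x$ for all $k$-formulas $\psi\in y$. $R=\bigcup_iR_i$ and $R^*$ is its reflexive transitive closure. Clusters are classes of $R^*\cap(R^* )^{-1}$; the skeleton is the poset of clusters with $C\le D$ iff $xR^*y$ for some $x\in C,y\in D$; the height of a frame is the maximal size of a chain in its skeleton; the depth of $x$ is the height of the restriction of the frame to $R^*(x)$. For $0<h<\omega$, a frame is $h$-heavy if for every point $x$ of depth $>h$ there is $y$ with $xR^*y$ and depth of $y$ exactly $h$. *)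

theory Defs
  imports Main "HOL-Library.Extended_Nat"
begin

datatype fm = Var nat | Bot | Imp fm fm | Box nat fm

definition Neg :: "fm \<Rightarrow> fm" where "Neg a = Imp a Bot"
definition Or :: "fm \<Rightarrow> fm \<Rightarrow> fm" where "Or a b = Imp (Neg a) b"
definition And :: "fm \<Rightarrow> fm \<Rightarrow> fm" where "And a b = Neg (Imp a (Neg b))"
definition Top :: fm where "Top = Neg Bot"
definition Dia :: "nat \<Rightarrow> fm \<Rightarrow> fm" where "Dia i a = Neg (Box i (Neg a))"

definition disj :: "fm list \<Rightarrow> fm" where "disj xs = foldr Or xs Bot"
definition conj :: "fm list \<Rightarrow> fm" where "conj xs = foldr And xs Top"

fun nfm :: "nat \<Rightarrow> fm \<Rightarrow> bool" where
  "nfm n (Var j) = True"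
| "nfm n Bot = True"
| "nfm n (Imp a b) = (nfm n a \<and> nfm n b)"
| "nfm n (Box i a) = (i < n \<and> nfm n a)"

fun vars_lt :: "enat \<Rightarrow> fm \<Rightarrow> bool" where
  "vars_lt k (Var j) = (enat j < k)"
| "vars_lt k Bot = True"
| "vars_lt k (Imp a b) = (vars_lt k a \<and> vars_lt k b)"
| "vars_lt k (Box i a) = vars_lt k a"

definition kfm :: "nat \<Rightarrow> enat \<Rightarrow> fm \<Rightarrow> bool" where
  "kfm n k a = (nfm n a \<and> vars_lt k a)"

fun peval :: "(fm \<Rightarrow> bool) \<Rightarrow> fm \<Rightarrow> bool" where
  "peval v (Var j) = v (Var j)"
| "peval v Bot = False"
| "peval v (Imp a b) = (peval v a \<longrightarrow> peval v b)"
| "peval v (Box i a) = v (Box i a)"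

definition tautology :: "fm \<Rightarrow> bool" where
  "tautology a = (\<forall>v. peval v a)"

fun subst :: "(nat \<Rightarrow> fm) \<Rightarrow> fm \<Rightarrow> fm" where
  "subst s (Var j) = s j"
| "subst s Bot = Bot"
| "subst s (Imp a b) = Imp (subst s a) (subst s b)"
| "subst s (Box i a) = Box i (subst s a)"

definition normal_logic :: "nat \<Rightarrow> fm set \<Rightarrow> bool" where
  "normal_logic n L \<longleftrightarrow>
     L \<subseteq> {a. nfm n a}
   \<and> (\<forall>a. nfm n a \<and> tautology a \<longrightarrow> a \<in> L)
   \<and> (\<forall>i<n. Imp (Box i (Imp (Var 0) (Var 1))) (Imp (Box i (Var 0)) (Box i (Var 1))) \<in> L)
   \<and> (\<forall>a b. a \<in> L \<longrightarrow> Imp a b \<in> L \<longrightarrow> b \<in> L)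
   \<and> (\<forall>i a. i < n \<longrightarrow> a \<in> L \<longrightarrow> Box i a \<in> L)
   \<and> (\<forall>s a. a \<in> L \<longrightarrow> (\<forall>j. nfm n (s j)) \<longrightarrow> subst s a \<in> L)"

definition consistent_logic :: "fm set \<Rightarrow> bool" where
  "consistent_logic L \<longleftrightarrow> Bot \<notin> L"

definition dia_any :: "nat \<Rightarrow> fm \<Rightarrow> fm" where
  "dia_any n a = disj (map (\<lambda>j. Dia j a) [0..<n])"

fun dia_iter :: "nat \<Rightarrow> nat \<Rightarrow> fm \<Rightarrow> fm" where
  "dia_iter n 0 a = a"
| "dia_iter n (Suc i) a = dia_iter n i (dia_any n a)"

definition dia_le :: "nat \<Rightarrow> nat \<Rightarrow> fm \<Rightarrow> fm" where
  "dia_le n m a = disj (map (\<lambda>i. dia_iter n i a) [0..<Suc m])"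

definition pretransitive :: "nat \<Rightarrow> fm set \<Rightarrow> bool" where
  "pretransitive n L \<longleftrightarrow> (\<exists>m. Imp (dia_iter n (Suc m) (Var 0)) (dia_le n m (Var 0)) \<in> L)"

definition L_consistent :: "fm set \<Rightarrow> fm set \<Rightarrow> bool" where
  "L_consistent L x \<longleftrightarrow> (\<forall>xs. set xs \<subseteq> x \<longrightarrow> Neg (conj xs) \<notin> L)"

definition MCS :: "nat \<Rightarrow> fm set \<Rightarrow> enat \<Rightarrow> fm set \<Rightarrow> bool" where
  "MCS n L k x \<longleftrightarrow> x \<subseteq> {a. kfm n k a} \<and> L_consistent L x
     \<and> (\<forall>y. x \<subseteq> y \<and> y \<subseteq> {a. kfm n k a} \<and> L_consistent L y \<longrightarrow> y = x)"

definition canW :: "nat \<Rightarrow> fm set \<Rightarrow> enat \<Rightarrow> fm set set" where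
  "canW n L k = {x. MCS n L k x}"

definition canRi :: "nat \<Rightarrow> fm set \<Rightarrow> enat \<Rightarrow> nat \<Rightarrow> (fm set \<times> fm set) set" where
  "canRi n L k i = {(x, y). x \<in> canW n L k \<and> y \<in> canW n L k
        \<and> (\<forall>\<psi>. kfm n k \<psi> \<longrightarrow> \<psi> \<in> y \<longrightarrow> Dia i \<psi> \<in> x)}"

definition canR :: "nat \<Rightarrow> fm set \<Rightarrow> enat \<Rightarrow> (fm set \<times> fm set) set" where
  "canR n L k = (\<Union>i<n. canRi n L k i)"

definition rstar :: "'a set \<Rightarrow> ('a \<times> 'a) set \<Rightarrow> ('a \<times> 'a) set" where
  "rstar V R = (R \<inter> (V \<times> V))\<^sup>* \<inter> (V \<times> V)"

definition cluster :: "'a set \<Rightarrow> ('a \<times> 'a) set \<Rightarrow> 'a \<Rightarrow> 'a set" where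
  "cluster V R a = {b \<in> V. (a, b) \<in> rstar V R \<and> (b, a) \<in> rstar V R}"

definition clusters :: "'a set \<Rightarrow> ('a \<times> 'a) set \<Rightarrow> 'a set set" where
  "clusters V R = cluster V R ` V"

definition skel_le :: "'a set \<Rightarrow> ('a \<times> 'a) set \<Rightarrow> 'a set \<Rightarrow> 'a set \<Rightarrow> bool" where
  "skel_le V R C D \<longleftrightarrow> (\<exists>a\<in>C. \<exists>b\<in>D. (a, b) \<in> rstar V R)"

definition skel_chain :: "'a set \<Rightarrow> ('a \<times> 'a) set \<Rightarrow> 'a set set \<Rightarrow> bool" where
  "skel_chain V R S \<longleftrightarrow> S \<subseteq> clusters V R
     \<and> (\<forall>C\<in>S. \<forall>D\<in>S. skel_le V R C D \<or> skel_le V R D C)"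

definition height :: "'a set \<Rightarrow> ('a \<times> 'a) set \<Rightarrow> enat" where
  "height V R = Sup {enat (card S) | S. finite S \<and> skel_chain V R S}"

definition depth :: "'a set \<Rightarrow> ('a \<times> 'a) set \<Rightarrow> 'a \<Rightarrow> enat" where
  "depth V R x = height (rstar V R `` {x}) R"

definition heavy :: "nat \<Rightarrow> 'a set \<Rightarrow> ('a \<times> 'a) set \<Rightarrow> bool" where
  "heavy h V R \<longleftrightarrow> (\<forall>x\<in>V. depth V R x > enat h \<longrightarrow>
       (\<exists>y. (x, y) \<in> rstar V R \<and> depth V R y = enat h))"

end

theory Submission
  imports Defs
begin

text \<open>
  Let \<open>\<Diamond>\<^bsup>m+1\<^esup>p \<rightarrow> \<Diamond>\<^bsup>\<le>m\<^esup>p\<close> be in \<open>L\<close>. In the canonical frame \<open>R\<^bsup>i\<^esup>\<close> is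
  defined by \<open>\<Diamond>\<^bsup>i\<^esup>\<close>, and pretransitivity makes \<open>R\<^sup>*\<close> modally definable:
  \<open>x R\<^sup>* y\<close> iff \<open>\<Diamond>\<^bsup>\<le>m\<^esup>\<psi> \<in> x\<close> for all \<open>\<psi> \<in> y\<close>. Since \<open>\<Diamond>\<^bsup>\<le>m\<^esup>\<psi> \<notin> c\<close> propagates
  upwards along \<open>R\<^sup>*\<close>, for an \<open>R\<^sup>*\<close>-chain \<open>C\<close> the set of all \<open>\<not>\<psi>\<close> with
  \<open>\<Diamond>\<^bsup>\<le>m\<^esup>\<psi> \<notin> c\<close> for some \<open>c \<in> C\<close> is the union of a chain of consistent sets, and any
  maximal consistent extension of it is an \<open>R\<^sup>*\<close>-upper bound of \<open>C\<close>. By the Hausdorff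
  maximal principle every point therefore sees a point \<open>y\<close> that is seen back by all its
  \<open>R\<^sup>*\<close>-successors, and such a \<open>y\<close> has depth 1.
\<close>

section \<open>Frames\<close>

lemma rstar_eq: "R \<subseteq> V \<times> V \<Longrightarrow> rstar V R = R\<^sup>* \<inter> V \<times> V"
  unfolding rstar_def by (simp add: Int_absorb2)

lemma height_eq_1_if_strongly_connected:
  assumes a: "a \<in> V" and conn: "\<And>b c. b \<in> V \<Longrightarrow> c \<in> V \<Longrightarrow> (b, c) \<in> rstar V R"
  shows "height V R = enat 1"
proof -
  have "clusters V R = {V}"
    using a conn by (auto simp: clusters_def cluster_def)
  then have chain_card: "card S \<le> 1" if "skel_chain V R S" for S
    using that card_mono[of "{V}" S] by (simp add: skel_chain_def)
  have "skel_chain V R {V}"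
    using \<open>clusters V R = {V}\<close> a conn by (auto simp: skel_chain_def skel_le_def)
  then have "enat 1 \<in> {enat (card S) | S. finite S \<and> skel_chain V R S}"
    by (intro CollectI exI[of _ "{V}"]) simp
  then show ?thesis
    unfolding height_def using chain_card by (intro antisym Sup_least Sup_upper) auto
qed

lemma depth_eq_1_if_final:
  assumes y: "y \<in> V" and final: "\<And>z. (y, z) \<in> rstar V R \<Longrightarrow> (z, y) \<in> rstar V R"
  shows "depth V R y = enat 1"
proof -
  define C where "C = rstar V R `` {y}"
  let ?S = "R \<inter> V \<times> V"
  have C_iff: "z \<in> C \<longleftrightarrow> (y, z) \<in> ?S\<^sup>* \<and> z \<in> V" for z
    using y by (auto simp: C_def rstar_def)
  have stays_in_C: "(a, b) \<in> (R \<inter> C \<times> C)\<^sup>* \<and> b \<in> C" if "(a, b) \<in> ?S\<^sup>*" "a \<in> C" for a b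
    using that
  proof (induction rule: rtrancl_induct)
    case (step u b)
    then have "b \<in> C"
      using C_iff by (blast intro: rtrancl_into_rtrancl)
    with step show ?case
      by (blast intro: rtrancl_into_rtrancl)
  qed simp
  have "(a, b) \<in> rstar C R" if "a \<in> C" "b \<in> C" for a b
  proof -
    have "(a, y) \<in> ?S\<^sup>*"
      using final that(1) by (auto simp: C_def rstar_def)
    moreover have "(y, b) \<in> ?S\<^sup>*"
      using C_iff that(2) by blast
    ultimately show ?thesis
      using stays_in_C that unfolding rstar_def by (blast intro: rtrancl_trans)
  qed
  moreover have "y \<in> C"
    using y C_iff by blast
  ultimately show ?thesis
    unfolding depth_def C_def[symmetric] by (rule height_eq_1_if_strongly_connected[rotated])
qed

lemma exists_rtrancl_final_successor:
  assumes RW: "R \<subseteq> W \<times> W" and x: "x \<in> W"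
    and bound: "\<And>C. C \<noteq> {} \<Longrightarrow> C \<subseteq> W \<Longrightarrow> \<forall>a\<in>C. \<forall>b\<in>C. (a, b) \<in> R\<^sup>* \<or> (b, a) \<in> R\<^sup>*
                  \<Longrightarrow> \<exists>w\<in>W. \<forall>c\<in>C. (c, w) \<in> R\<^sup>*"
  obtains y where "(x, y) \<in> R\<^sup>*" "\<And>z. (y, z) \<in> R\<^sup>* \<Longrightarrow> (z, y) \<in> R\<^sup>*"
proof -
  interpret cone: pred_on "R\<^sup>* `` {x}" "\<lambda>a b. (a, b) \<in> R\<^sup>*" .
  have cone_W: "R\<^sup>* `` {x} \<subseteq> W"
  proof
    fix z assume "z \<in> R\<^sup>* `` {x}"
    then have "(x, z) \<in> R\<^sup>*" by simp
    then show "z \<in> W"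
      by (induction rule: rtrancl_induct) (use x RW in auto)
  qed
  obtain M where M: "cone.maxchain M"
    using cone.Hausdorff ..
  then have M_chain: "cone.chain M" and M_max: "\<And>S. cone.chain S \<Longrightarrow> \<not> M \<subset> S"
    by (auto simp: cone.maxchain_def)
  have "M \<noteq> {}"
  proof
    assume "M = {}"
    moreover have "cone.chain {x}"
      by (auto simp: cone.chain_def)
    ultimately show False
      using M_max by blast
  qed
  moreover have M_cone: "M \<subseteq> R\<^sup>* `` {x}" and "\<forall>a\<in>M. \<forall>b\<in>M. (a, b) \<in> R\<^sup>* \<or> (b, a) \<in> R\<^sup>*"
    using M_chain by (auto simp: cone.chain_def)
  ultimately obtain w where w: "\<forall>c\<in>M. (c, w) \<in> R\<^sup>*"
    using bound[of M] cone_W by blast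
  obtain c where "c \<in> M"
    using \<open>M \<noteq> {}\<close> by blast
  then have xw: "(x, w) \<in> R\<^sup>*"
    using M_cone w by (blast intro: rtrancl_trans)
  show thesis
  proof (rule that[OF xw])
    fix z assume wz: "(w, z) \<in> R\<^sup>*"
    then have "z \<in> R\<^sup>* `` {x}"
      using xw by (blast intro: rtrancl_trans)
    moreover have "\<forall>c\<in>M. (c, z) \<in> R\<^sup>*"
      using w wz by (blast intro: rtrancl_trans)
    ultimately have "cone.chain ({z} \<union> M)"
      by (intro cone.chain_extend[OF M_chain]) auto
    then have "z \<in> M"
      using M_max by blast
    then show "(z, w) \<in> R\<^sup>*"
      using w by blast
  qed
qed

section \<open>Propositional reasoning\<close>

lemma peval_Neg[simp]: "peval v (Neg a) = (\<not> peval v a)"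
  by (simp add: Neg_def)

lemma peval_Or[simp]: "peval v (Or a b) = (peval v a \<or> peval v b)"
  by (auto simp: Or_def)

lemma peval_And[simp]: "peval v (And a b) = (peval v a \<and> peval v b)"
  by (auto simp: And_def)

lemma peval_Top[simp]: "peval v Top"
  by (simp add: Top_def)

lemma peval_conj[simp]: "peval v (conj xs) = (\<forall>a\<in>set xs. peval v a)"
  by (induction xs) (auto simp: conj_def)

lemma peval_disj[simp]: "peval v (disj xs) = (\<exists>a\<in>set xs. peval v a)"
  by (induction xs) (auto simp: disj_def)

lemma kfm_simps[simp]:
  "kfm n k Bot"
  "kfm n k (Imp a b) = (kfm n k a \<and> kfm n k b)"
  "kfm n k (Box i a) = (i < n \<and> kfm n k a)"
  "kfm n k (Neg a) = kfm n k a"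
  "kfm n k (Or a b) = (kfm n k a \<and> kfm n k b)"
  "kfm n k (And a b) = (kfm n k a \<and> kfm n k b)"
  "kfm n k Top"
  "kfm n k (Dia i a) = (i < n \<and> kfm n k a)"
  by (auto simp: kfm_def Neg_def Or_def And_def Top_def Dia_def)

lemma kfm_conj[simp]: "kfm n k (conj xs) = (\<forall>a\<in>set xs. kfm n k a)"
  by (induction xs) (auto simp: conj_def)

lemma kfm_disj[simp]: "kfm n k (disj xs) = (\<forall>a\<in>set xs. kfm n k a)"
  by (induction xs) (auto simp: disj_def)

lemma kfm_dia_any[simp]: "kfm n k (dia_any n a) = (n = 0 \<or> kfm n k a)"
  by (auto simp: dia_any_def)

lemma kfm_dia_iter[simp]: "kfm n k a \<Longrightarrow> kfm n k (dia_iter n i a)"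
  by (induction i arbitrary: a) auto

lemma kfm_dia_le[simp]: "kfm n k a \<Longrightarrow> kfm n k (dia_le n m a)"
  by (auto simp: dia_le_def)

lemma kfm_imp_nfm: "kfm n k a \<Longrightarrow> nfm n a"
  by (simp add: kfm_def)

lemma subst_simps[simp]:
  "subst s (Neg a) = Neg (subst s a)"
  "subst s (Or a b) = Or (subst s a) (subst s b)"
  "subst s (Dia i a) = Dia i (subst s a)"
  "subst s (disj xs) = disj (map (subst s) xs)"
  by (simp_all add: Neg_def Or_def Dia_def disj_def, induction xs, simp_all add: Or_def Neg_def)

lemma subst_dia_any[simp]: "subst s (dia_any n a) = dia_any n (subst s a)"
  by (simp add: dia_any_def comp_def)

lemma subst_dia_iter[simp]: "subst s (dia_iter n i a) = dia_iter n i (subst s a)"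
  by (induction i arbitrary: a) auto

lemma subst_dia_le[simp]: "subst s (dia_le n m a) = dia_le n m (subst s a)"
  by (simp add: dia_le_def comp_def del: upt_Suc)

lemma inj_Dia: "inj (Dia i)"
  by (auto simp: inj_def Dia_def Neg_def)

lemma L_consistent_Union_chain:
  assumes "\<C> \<noteq> {}" "subset.chain \<A> \<C>" "\<forall>X\<in>\<C>. L_consistent L X"
  shows "L_consistent L (\<Union>\<C>)"
  unfolding L_consistent_def
proof (intro allI impI)
  fix xs assume "set xs \<subseteq> \<Union>\<C>"
  then obtain X where "X \<in> \<C>" "set xs \<subseteq> X"
    using finite_subset_Union_chain[OF _ _ assms(1,2)] by blast
  then show "Neg (conj xs) \<notin> L"
    using assms(3) by (auto simp: L_consistent_def)
qed

section \<open>The canonical frame of a normal logic\<close>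

locale canonical_frame =
  fixes n :: nat and L :: "fm set" and k :: enat
  assumes normal: "normal_logic n L"
begin

abbreviation mcs :: "fm set \<Rightarrow> bool" where
  "mcs \<equiv> MCS n L k"

abbreviation R :: "(fm set \<times> fm set) set" where
  "R \<equiv> canR n L k"

lemma L_nfm: "a \<in> L \<Longrightarrow> nfm n a"
  using normal unfolding normal_logic_def by auto

lemma tautology_in_L: "nfm n a \<Longrightarrow> tautology a \<Longrightarrow> a \<in> L"
  using normal unfolding normal_logic_def by auto

lemma L_mp: "a \<in> L \<Longrightarrow> Imp a b \<in> L \<Longrightarrow> b \<in> L"
  using normal unfolding normal_logic_def by blast

lemma L_Box: "i < n \<Longrightarrow> a \<in> L \<Longrightarrow> Box i a \<in> L"
  using normal unfolding normal_logic_def by blast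

lemma L_subst: "a \<in> L \<Longrightarrow> (\<And>j. nfm n (s j)) \<Longrightarrow> subst s a \<in> L"
  using normal unfolding normal_logic_def by blast

lemma L_K:
  assumes "i < n" "nfm n a" "nfm n b"
  shows "Imp (Box i (Imp a b)) (Imp (Box i a) (Box i b)) \<in> L"
proof -
  define s where "s j = (if j = 0 then a else if j = 1 then b else Var j)" for j
  have "Imp (Box i (Imp (Var 0) (Var 1))) (Imp (Box i (Var 0)) (Box i (Var 1))) \<in> L"
    using normal assms(1) unfolding normal_logic_def by blast
  then have "subst s (Imp (Box i (Imp (Var 0) (Var 1))) (Imp (Box i (Var 0)) (Box i (Var 1)))) \<in> L"
    by (rule L_subst) (use assms in \<open>simp add: s_def\<close>)
  then show ?thesis
    by (simp add: s_def)
qed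

lemma L_tautological_consequence:
  assumes "a \<in> L" "a' \<in> L" "nfm n b" "\<And>v. peval v a \<Longrightarrow> peval v a' \<Longrightarrow> peval v b"
  shows "b \<in> L"
proof -
  have "Imp a (Imp a' b) \<in> L"
    using assms L_nfm[OF assms(1)] L_nfm[OF assms(2)] by (intro tautology_in_L) (auto simp: tautology_def)
  with assms(1,2) show ?thesis
    by (blast intro: L_mp)
qed

lemma Top_in_L: "Top \<in> L"
  by (rule tautology_in_L) (auto simp: tautology_def Top_def Neg_def)

lemma mcs_kfm: "mcs x \<Longrightarrow> a \<in> x \<Longrightarrow> kfm n k a"
  by (auto simp: MCS_def)

lemma mcs_not_refutable: "mcs x \<Longrightarrow> set xs \<subseteq> x \<Longrightarrow> Neg (conj xs) \<notin> L"
  by (auto simp: MCS_def L_consistent_def)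

lemma nfm_Neg_conj: "mcs x \<Longrightarrow> set xs \<subseteq> x \<Longrightarrow> nfm n (Neg (conj xs))"
  by (intro kfm_imp_nfm[where k = k]) (auto dest: mcs_kfm)

lemma mcs_refutable_insert:
  assumes "mcs x" "kfm n k a" "a \<notin> x"
  obtains ys where "set ys \<subseteq> insert a x" "Neg (conj ys) \<in> L"
proof -
  have "\<not> L_consistent L (insert a x)"
    using assms unfolding MCS_def by blast
  then show ?thesis
    using that unfolding L_consistent_def by blast
qed

lemma mcs_not_mem_Neg: "mcs x \<Longrightarrow> a \<in> x \<Longrightarrow> Neg a \<notin> x"
  using mcs_not_refutable[of x "[a, Neg a]"] mcs_kfm[of x a]
    tautology_in_L[of "Neg (conj [a, Neg a])"]
  by (auto simp: tautology_def kfm_def conj_def And_def Neg_def Top_def)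

lemma mcs_Neg_if_not_mem:
  assumes x: "mcs x" and a: "kfm n k a" "a \<notin> x"
  shows "Neg a \<in> x"
proof (rule ccontr)
  assume "Neg a \<notin> x"
  moreover have "kfm n k (Neg a)"
    using a by simp
  ultimately obtain ys2 where ys2: "set ys2 \<subseteq> insert (Neg a) x" "Neg (conj ys2) \<in> L"
    using mcs_refutable_insert[OF x] by blast
  obtain ys1 where ys1: "set ys1 \<subseteq> insert a x" "Neg (conj ys1) \<in> L"
    using mcs_refutable_insert[OF x a] .
  define zs where "zs = filter (\<lambda>b. b \<in> x) (ys1 @ ys2)"
  have zs: "set zs \<subseteq> x"
    by (auto simp: zs_def)
  \<comment> \<open>Cut on \<open>a\<close>: the two refutations combine into one of the part lying in \<open>x\<close>.\<close>
  have "Neg (conj zs) \<in> L"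
  proof (rule L_tautological_consequence[OF ys1(2) ys2(2) nfm_Neg_conj[OF x zs]])
    fix v assume v1: "peval v (Neg (conj ys1))" and v2: "peval v (Neg (conj ys2))"
    show "peval v (Neg (conj zs))"
    proof (rule ccontr)
      assume "\<not> ?thesis"
      then have in_x: "peval v b" if "b \<in> set ys1 \<union> set ys2" "b \<in> x" for b
        using that by (auto simp: zs_def)
      have "\<not> peval v a"
        using v1 ys1(1) in_x by auto
      moreover have "peval v a"
        using v2 ys2(1) in_x by auto
      ultimately show False
        by simp
    qed
  qed
  then show False
    using mcs_not_refutable[OF x zs] by blast
qed

lemma mcs_L_consequence:
  assumes x: "mcs x" and xs: "set xs \<subseteq> x" and b: "b \<in> L" and a: "kfm n k a"
    and imp: "\<And>v. peval v b \<Longrightarrow> \<forall>c\<in>set xs. peval v c \<Longrightarrow> peval v a"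
  shows "a \<in> x"
proof (rule ccontr)
  assume "a \<notin> x"
  then have sub: "set (Neg a # xs) \<subseteq> x"
    using mcs_Neg_if_not_mem[OF x a] xs by simp
  have "Neg (conj (Neg a # xs)) \<in> L"
    using imp by (intro L_tautological_consequence[OF b b nfm_Neg_conj[OF x sub]]) auto
  then show False
    using mcs_not_refutable[OF x sub] by blast
qed

lemma mcs_tautological_consequence:
  "mcs x \<Longrightarrow> set xs \<subseteq> x \<Longrightarrow> kfm n k a \<Longrightarrow> (\<And>v. \<forall>c\<in>set xs. peval v c \<Longrightarrow> peval v a) \<Longrightarrow> a \<in> x"
  using mcs_L_consequence[OF _ _ Top_in_L] by blast

lemma L_subset_mcs: "mcs x \<Longrightarrow> a \<in> L \<Longrightarrow> kfm n k a \<Longrightarrow> a \<in> x"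
  using mcs_L_consequence[of x "[]" a a] by auto

lemma mcs_disjE:
  assumes x: "mcs x" and d: "disj xs \<in> x"
  obtains a where "a \<in> set xs" "a \<in> x"
proof -
  have "\<exists>a\<in>set xs. a \<in> x"
  proof (rule ccontr)
    assume "\<not> (\<exists>a\<in>set xs. a \<in> x)"
    moreover have "\<forall>a\<in>set xs. kfm n k a"
      using mcs_kfm[OF x d] by simp
    ultimately have "set (map Neg xs) \<subseteq> x"
      using mcs_Neg_if_not_mem[OF x] by auto
    then have "Neg (disj xs) \<in> x"
      using mcs_kfm[OF x d] by (intro mcs_tautological_consequence[OF x, of "map Neg xs"]) auto
    then show False
      using mcs_not_mem_Neg[OF x d] by blast
  qed
  then show ?thesis
    using that by blast
qed

lemma mcs_disjI: "mcs x \<Longrightarrow> a \<in> x \<Longrightarrow> a \<in> set xs \<Longrightarrow> \<forall>b\<in>set xs. kfm n k b \<Longrightarrow> disj xs \<in> x"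
  by (rule mcs_tautological_consequence[of x "[a]"]) auto

lemma mcs_conjI: "mcs x \<Longrightarrow> set xs \<subseteq> x \<Longrightarrow> conj xs \<in> x"
  by (rule mcs_tautological_consequence[of x xs]) (auto dest: mcs_kfm)

lemma mcs_conjE: "mcs x \<Longrightarrow> conj xs \<in> x \<Longrightarrow> a \<in> set xs \<Longrightarrow> a \<in> x"
  by (rule mcs_tautological_consequence[of x "[conj xs]"]) (auto dest: mcs_kfm)

lemma lindenbaum:
  assumes "L_consistent L G" "G \<subseteq> {a. kfm n k a}"
  obtains x where "mcs x" "G \<subseteq> x"
proof -
  define A where "A = {y. G \<subseteq> y \<and> y \<subseteq> {a. kfm n k a} \<and> L_consistent L y}"
  have "\<exists>U\<in>A. \<forall>X\<in>C. X \<subseteq> U" if C: "C \<in> chains A" for C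
  proof (cases "C = {}")
    case True
    then show ?thesis
      using assms by (auto simp: A_def)
  next
    case False
    have "subset.chain A C"
      using C by (simp add: chains_alt_def)
    moreover have "\<forall>X\<in>C. L_consistent L X"
      using C by (auto simp: A_def chains_def)
    ultimately have "L_consistent L (\<Union>C)"
      using False by (intro L_consistent_Union_chain)
    moreover have "G \<subseteq> \<Union>C" "\<Union>C \<subseteq> {a. kfm n k a}"
      using False C by (auto simp: A_def chains_def)
    ultimately show ?thesis
      by (intro bexI[of _ "\<Union>C"]) (auto simp: A_def)
  qed
  then obtain M where "M \<in> A" "\<forall>X\<in>A. M \<subseteq> X \<longrightarrow> X = M"
    using Zorn_Lemma2[of A] by blast
  then have "mcs M" "G \<subseteq> M"
    by (auto simp: MCS_def A_def)
  then show ?thesis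
    by (rule that)
qed

lemma mcs_Box_mp:
  assumes x: "mcs x" and i: "i < n" and "Box i (Imp a b) \<in> x" "Box i a \<in> x"
  shows "Box i b \<in> x"
proof -
  have k_imp: "kfm n k (Box i (Imp a b))"
    using mcs_kfm[OF x assms(3)] .
  then have "Imp (Box i (Imp a b)) (Imp (Box i a) (Box i b)) \<in> L"
    using L_K[OF i] by (simp add: kfm_def)
  then show ?thesis
    using assms k_imp by (intro mcs_L_consequence[OF x, of "[Box i (Imp a b), Box i a]"]) auto
qed

lemma mcs_Box_mono:
  assumes x: "mcs x" and i: "i < n" and "Box i a \<in> x" "Imp a b \<in> L" "kfm n k b"
  shows "Box i b \<in> x"
proof -
  have "kfm n k a"
    using mcs_kfm[OF x assms(3)] by simp
  then have "Box i (Imp a b) \<in> x"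
    using assms by (intro L_subset_mcs[OF x] L_Box) auto
  then show ?thesis
    using mcs_Box_mp[OF x i] assms(3) by blast
qed

lemma mcs_Box_conj:
  assumes x: "mcs x" and i: "i < n"
  shows "\<forall>a\<in>set as. Box i a \<in> x \<Longrightarrow> Box i (conj as) \<in> x"
proof (induction as)
  case Nil
  have "Box i Top \<in> x"
    using i by (intro L_subset_mcs[OF x] L_Box Top_in_L) auto
  then show ?case
    by (simp add: conj_def)
next
  case (Cons a as)
  have ka: "kfm n k a" and kas: "kfm n k (conj as)"
    using Cons mcs_kfm[OF x, of "Box i a"] mcs_kfm[OF x, of "Box i (conj as)"] by auto
  then have pairing: "Imp a (Imp (conj as) (And a (conj as))) \<in> L"
    by (intro tautology_in_L kfm_imp_nfm[where k = k]) (auto simp: tautology_def)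
  have "Box i (Imp (conj as) (And a (conj as))) \<in> x"
    by (rule mcs_Box_mono[OF x i _ pairing]) (use Cons.prems ka kas in auto)
  moreover have "Box i (conj as) \<in> x"
    using Cons by simp
  ultimately have "Box i (And a (conj as)) \<in> x"
    by (rule mcs_Box_mp[OF x i])
  then show ?case
    by (simp add: conj_def)
qed

lemma canRi_iff:
  "(x, y) \<in> canRi n L k i \<longleftrightarrow> mcs x \<and> mcs y \<and> (\<forall>\<psi>. kfm n k \<psi> \<longrightarrow> \<psi> \<in> y \<longrightarrow> Dia i \<psi> \<in> x)"
  by (simp add: canRi_def canW_def)

lemma canR_iff: "(x, y) \<in> R \<longleftrightarrow> (\<exists>i<n. (x, y) \<in> canRi n L k i)"
  by (auto simp: canR_def)

lemma canR_subset_canW: "R \<subseteq> canW n L k \<times> canW n L k"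
  by (auto simp: canR_iff canRi_iff canW_def)

lemma canRi_existence:
  assumes x: "mcs x" and i: "i < n" and d: "Dia i \<psi> \<in> x"
  obtains z where "(x, z) \<in> canRi n L k i" "\<psi> \<in> z"
proof -
  have k\<psi>: "kfm n k \<psi>"
    using mcs_kfm[OF x d] by simp
  define D where "D = insert \<psi> {\<phi>. kfm n k \<phi> \<and> Box i \<phi> \<in> x}"
  have "L_consistent L D"
    unfolding L_consistent_def
  proof (intro allI impI notI)
    fix xs assume xs: "set xs \<subseteq> D" and refuted: "Neg (conj xs) \<in> L"
    define ps where "ps = filter (\<lambda>a. a \<noteq> \<psi>) xs"
    have ps: "\<forall>a\<in>set ps. Box i a \<in> x \<and> kfm n k a"
      using xs by (auto simp: ps_def D_def)
    have "Box i (conj ps) \<in> x"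
      using ps by (intro mcs_Box_conj[OF x i]) auto
    moreover have "Imp (conj ps) (Neg \<psi>) \<in> L"
      using ps k\<psi> by (intro L_tautological_consequence[OF refuted refuted] kfm_imp_nfm[where k = k])
        (auto simp: ps_def)
    ultimately have "Box i (Neg \<psi>) \<in> x"
      by (rule mcs_Box_mono[OF x i]) (simp add: k\<psi>)
    then show False
      using d mcs_not_mem_Neg[OF x] by (simp add: Dia_def)
  qed
  moreover have "D \<subseteq> {a. kfm n k a}"
    using k\<psi> by (auto simp: D_def)
  ultimately obtain z where z: "mcs z" "D \<subseteq> z"
    by (rule lindenbaum)
  have "Dia i \<phi> \<in> x" if "kfm n k \<phi>" "\<phi> \<in> z" for \<phi>
  proof (rule ccontr)
    assume "Dia i \<phi> \<notin> x"
    then have "Box i (Neg \<phi>) \<in> x"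
      using mcs_Neg_if_not_mem[OF x] that i
      by (intro mcs_tautological_consequence[OF x, of "[Neg (Dia i \<phi>)]"]) (auto simp: Dia_def)
    then have "Neg \<phi> \<in> z"
      using z that by (auto simp: D_def)
    then show False
      using mcs_not_mem_Neg[OF z(1) that(2)] by blast
  qed
  then show ?thesis
    using that x z by (auto simp: canRi_iff D_def)
qed

lemma canR_mcs: "(x, y) \<in> R \<Longrightarrow> mcs x \<and> mcs y"
  by (auto simp: canR_iff canRi_iff)

lemma rtrancl_mcs: "(x, y) \<in> R\<^sup>* \<Longrightarrow> mcs x \<Longrightarrow> mcs y"
  by (induction rule: rtrancl_induct) (auto dest: canR_mcs)

lemma relpow_mcs: "(x, y) \<in> R ^^ i \<Longrightarrow> mcs x \<Longrightarrow> mcs y"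
  by (rule rtrancl_mcs[OF relpow_imp_rtrancl])

lemma mcs_dia_anyI:
  assumes "mcs u" "j < n" "Dia j \<psi> \<in> u"
  shows "dia_any n \<psi> \<in> u"
proof -
  have "kfm n k \<psi>"
    using mcs_kfm[OF assms(1,3)] by simp
  then show ?thesis
    unfolding dia_any_def using assms by (intro mcs_disjI[of u "Dia j \<psi>"]) auto
qed

lemma mcs_dia_anyE:
  assumes "mcs u" "dia_any n \<psi> \<in> u"
  obtains j where "j < n" "Dia j \<psi> \<in> u"
proof -
  obtain a where "a \<in> set (map (\<lambda>j. Dia j \<psi>) [0..<n])" "a \<in> u"
    using assms unfolding dia_any_def by (rule mcs_disjE)
  then show thesis
    using that by auto
qed

lemma relpow_imp_dia_iter: "(y, z) \<in> R ^^ i \<Longrightarrow> \<psi> \<in> z \<Longrightarrow> dia_iter n i \<psi> \<in> y"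
proof (induction i arbitrary: z \<psi>)
  case (Suc i)
  obtain u where yu: "(y, u) \<in> R ^^ i" and uz: "(u, z) \<in> R"
    using Suc.prems(1) by (rule relpow_Suc_E)
  then obtain j where j: "j < n" "(u, z) \<in> canRi n L k j"
    by (auto simp: canR_iff)
  then have "Dia j \<psi> \<in> u"
    using Suc.prems(2) by (auto simp: canRi_iff dest: mcs_kfm)
  then have "dia_any n \<psi> \<in> u"
    using j canR_mcs[OF uz] by (blast intro: mcs_dia_anyI)
  then show ?case
    using Suc.IH[OF yu] by simp
qed simp

lemma dia_iter_imp_relpow:
  assumes "mcs y" "dia_iter n i \<psi> \<in> y"
  obtains z where "(y, z) \<in> R ^^ i" "\<psi> \<in> z"
  using assms
proof (induction i arbitrary: \<psi> thesis)
  case (Suc i)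
  obtain u where yu: "(y, u) \<in> R ^^ i" and "dia_any n \<psi> \<in> u"
    using Suc.IH[OF _ Suc.prems(2)] Suc.prems(3) by auto
  moreover have u: "mcs u"
    using relpow_mcs[OF yu Suc.prems(2)] .
  ultimately obtain j where j: "j < n" "Dia j \<psi> \<in> u"
    by (blast elim: mcs_dia_anyE)
  then obtain z where "(u, z) \<in> canRi n L k j" "\<psi> \<in> z"
    using canRi_existence[OF u] by blast
  with yu j(1) show ?case
    using Suc.prems(1) canR_iff by (blast intro: relpow_Suc_I)
qed simp

lemma dia_iter_Suc_predecessor_consistent:
  assumes y: "mcs y" and w: "mcs w"
    and hw: "\<And>\<psi>. kfm n k \<psi> \<Longrightarrow> \<psi> \<in> w \<Longrightarrow> dia_iter n (Suc i) \<psi> \<in> y"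
  shows "\<exists>j<n. L_consistent L ({Dia j \<psi> | \<psi>. \<psi> \<in> w} \<union> {Neg \<phi> | \<phi>. kfm n k \<phi> \<and> dia_iter n i \<phi> \<notin> y})"
    (is "\<exists>j<n. L_consistent L (?G j)")
proof (rule ccontr)
  \<comment> \<open>Realising \<open>\<Diamond>\<^bsup>i+1\<^esup>\<close> of the conjunction of the finitely many \<open>\<psi> \<in> w\<close> used by the
      refutations \<open>f j\<close> yields a path \<open>y R\<^bsup>i\<^esup> u R\<^sub>j z\<close> with \<open>set (f j) \<subseteq> u\<close>.\<close>
  assume "\<not> ?thesis"
  then have "\<forall>j\<in>{..<n}. \<exists>xs. set xs \<subseteq> ?G j \<and> Neg (conj xs) \<in> L"
    unfolding L_consistent_def by blast
  from bchoice[OF this] obtain f where f: "\<And>j. j < n \<Longrightarrow> set (f j) \<subseteq> ?G j \<and> Neg (conj (f j)) \<in> L"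
    by blast
  define P where "P = (\<Union>j<n. {\<psi> \<in> w. Dia j \<psi> \<in> set (f j)})"
  have "finite {\<psi>. Dia j \<psi> \<in> set (f j)}" for j
    using finite_vimageI[OF List.finite_set inj_Dia] by (simp add: vimage_def)
  then have "finite P"
    unfolding P_def by (auto intro: finite_subset)
  then obtain ps where ps: "set ps = P"
    using finite_list by blast
  have "conj ps \<in> w"
    using ps by (intro mcs_conjI[OF w]) (auto simp: P_def)
  then have "dia_iter n (Suc i) (conj ps) \<in> y"
    using hw mcs_kfm[OF w] by blast
  then obtain z where "(y, z) \<in> R ^^ Suc i" and z: "conj ps \<in> z"
    by (rule dia_iter_imp_relpow[OF y])
  then obtain u j where yu: "(y, u) \<in> R ^^ i" and j: "j < n" "(u, z) \<in> canRi n L k j"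
    by (auto simp: canR_iff)
  then have u: "mcs u" and zm: "mcs z"
    by (auto simp: canRi_iff)
  have "set (f j) \<subseteq> u"
  proof
    fix e assume "e \<in> set (f j)"
    then consider (dia) \<psi> where "e = Dia j \<psi>" "\<psi> \<in> w" "\<psi> \<in> P"
      | (neg) \<phi> where "e = Neg \<phi>" "kfm n k \<phi>" "dia_iter n i \<phi> \<notin> y"
      using f[OF j(1)] j(1) unfolding P_def by blast
    then show "e \<in> u"
    proof cases
      case dia
      then have "\<psi> \<in> z"
        using mcs_conjE[OF zm z] ps by blast
      then show ?thesis
        using dia j(2) mcs_kfm[OF w] by (auto simp: canRi_iff)
    next
      case neg
      then have "\<phi> \<notin> u"
        using relpow_imp_dia_iter[OF yu] by blast
      then show ?thesis
        using mcs_Neg_if_not_mem[OF u] neg by simp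
    qed
  qed
  then show False
    using mcs_not_refutable[OF u] f[OF j(1)] by blast
qed

lemma relpow_if_dia_iter:
  "mcs y \<Longrightarrow> mcs w \<Longrightarrow> (\<And>\<psi>. kfm n k \<psi> \<Longrightarrow> \<psi> \<in> w \<Longrightarrow> dia_iter n i \<psi> \<in> y) \<Longrightarrow> (y, w) \<in> R ^^ i"
proof (induction i arbitrary: w)
  case 0
  then have "w \<subseteq> y"
    by (auto dest: mcs_kfm)
  then show ?case
    using 0 by (auto simp: MCS_def)
next
  case (Suc i)
  define G where "G j = {Dia j \<psi> | \<psi>. \<psi> \<in> w} \<union> {Neg \<phi> | \<phi>. kfm n k \<phi> \<and> dia_iter n i \<phi> \<notin> y}" for j
  obtain j where j: "j < n" and cons: "L_consistent L (G j)"
    using dia_iter_Suc_predecessor_consistent[OF Suc.prems] unfolding G_def by blast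
  have "G j \<subseteq> {a. kfm n k a}"
    using j mcs_kfm[OF Suc.prems(2)] by (auto simp: G_def)
  with cons obtain u where u: "mcs u" and "G j \<subseteq> u"
    by (rule lindenbaum)
  then have dia_u: "\<And>\<psi>. \<psi> \<in> w \<Longrightarrow> Dia j \<psi> \<in> u"
    and neg_u: "\<And>\<phi>. kfm n k \<phi> \<Longrightarrow> dia_iter n i \<phi> \<notin> y \<Longrightarrow> Neg \<phi> \<in> u"
    by (auto simp: G_def)
  have "(y, u) \<in> R ^^ i"
    using mcs_not_mem_Neg[OF u] neg_u by (intro Suc.IH[OF Suc.prems(1) u]) blast
  moreover have "(u, w) \<in> R"
    using u Suc.prems(2) j dia_u by (auto simp: canR_iff canRi_iff)
  ultimately show ?case
    by (rule relpow_Suc_I)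
qed

end

section \<open>Pretransitive logics\<close>

locale pretransitive_canonical_frame = canonical_frame +
  fixes m :: nat
  assumes pretransitive_axiom: "Imp (dia_iter n (Suc m) (Var 0)) (dia_le n m (Var 0)) \<in> L"
begin

lemma mcs_dia_leE:
  assumes "mcs y" "dia_le n m \<psi> \<in> y"
  obtains i where "i \<le> m" "dia_iter n i \<psi> \<in> y"
proof -
  obtain a where "a \<in> set (map (\<lambda>i. dia_iter n i \<psi>) [0..<Suc m])" "a \<in> y"
    using assms unfolding dia_le_def by (rule mcs_disjE)
  then show thesis
    using that by (auto simp del: upt_Suc simp: less_Suc_eq_le)
qed

lemma mcs_dia_leI:
  assumes y: "mcs y" and k\<psi>: "kfm n k \<psi>" and i: "i \<le> Suc m" and d: "dia_iter n i \<psi> \<in> y"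
  shows "dia_le n m \<psi> \<in> y"
proof (cases "i \<le> m")
  case True
  then have "dia_iter n i \<psi> \<in> set (map (\<lambda>i. dia_iter n i \<psi>) [0..<Suc m])"
    by (auto simp del: upt_Suc)
  then show ?thesis
    unfolding dia_le_def using k\<psi> by (intro mcs_disjI[OF y d]) (auto simp del: upt_Suc)
next
  case False
  define s where "s j = (if j = 0 then \<psi> else Var j)" for j
  have "subst s (Imp (dia_iter n (Suc m) (Var 0)) (dia_le n m (Var 0))) \<in> L"
    using pretransitive_axiom kfm_imp_nfm[OF k\<psi>] by (intro L_subst) (auto simp: s_def)
  then have axiom_instance: "Imp (dia_iter n (Suc m) \<psi>) (dia_le n m \<psi>) \<in> L"
    by (simp add: s_def del: dia_iter.simps)
  have "i = Suc m"
    using i False by simp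
  show ?thesis
    by (rule mcs_L_consequence[OF y _ axiom_instance, of "[dia_iter n (Suc m) \<psi>]"])
      (use d k\<psi> \<open>i = Suc m\<close> in auto)
qed

lemma rtrancl_imp_dia_le: "(y, z) \<in> R\<^sup>* \<Longrightarrow> mcs y \<Longrightarrow> \<psi> \<in> z \<Longrightarrow> dia_le n m \<psi> \<in> y"
proof (induction arbitrary: \<psi> rule: rtrancl_induct)
  case base
  then show ?case
    by (intro mcs_dia_leI[of y \<psi> 0]) (auto dest: mcs_kfm)
next
  case (step u z)
  obtain j where j: "j < n" "(u, z) \<in> canRi n L k j"
    using step.hyps(2) by (auto simp: canR_iff)
  then have u: "mcs u" and k\<psi>: "kfm n k \<psi>"
    using step.prems(2) by (auto simp: canRi_iff dest: mcs_kfm)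
  then have "Dia j \<psi> \<in> u"
    using j step.prems(2) by (auto simp: canRi_iff)
  then have "dia_le n m (dia_any n \<psi>) \<in> y"
    using j(1) u by (intro step.IH[OF step.prems(1)] mcs_dia_anyI)
  then obtain i where "i \<le> m" "dia_iter n (Suc i) \<psi> \<in> y"
    using step.prems(1) by (auto elim: mcs_dia_leE)
  then show ?case
    using step.prems(1) k\<psi> by (intro mcs_dia_leI[of y \<psi> "Suc i"]) auto
qed

lemma rtrancl_if_dia_le:
  assumes y: "mcs y" and w: "mcs w" and hw: "\<And>\<psi>. kfm n k \<psi> \<Longrightarrow> \<psi> \<in> w \<Longrightarrow> dia_le n m \<psi> \<in> y"
  shows "(y, w) \<in> R\<^sup>*"
proof -
  \<comment> \<open>A single exponent works for all of \<open>w\<close>: otherwise the conjunction of the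
      counterexamples for \<open>0, \<dots>, m\<close> lies in \<open>w\<close> and refutes each \<open>i \<le> m\<close>.\<close>
  have "\<exists>i. \<forall>\<psi>. kfm n k \<psi> \<longrightarrow> \<psi> \<in> w \<longrightarrow> dia_iter n i \<psi> \<in> y"
  proof (rule ccontr)
    assume "\<not> ?thesis"
    then have "\<forall>i. \<exists>\<psi>. kfm n k \<psi> \<and> \<psi> \<in> w \<and> dia_iter n i \<psi> \<notin> y"
      by blast
    then obtain g where g: "\<And>i. kfm n k (g i) \<and> g i \<in> w \<and> dia_iter n i (g i) \<notin> y"
      by (metis (no_types, lifting) choice)
    define c where "c = conj (map g [0..<Suc m])"
    have "c \<in> w"
      unfolding c_def using g by (intro mcs_conjI[OF w]) auto
    then have "dia_le n m c \<in> y"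
      using hw mcs_kfm[OF w] by blast
    then obtain i where i: "i \<le> m" "dia_iter n i c \<in> y"
      by (rule mcs_dia_leE[OF y])
    then obtain z where z: "(y, z) \<in> R ^^ i" "c \<in> z"
      using dia_iter_imp_relpow[OF y] by blast
    have "g i \<in> set (map g [0..<Suc m])"
      using i(1) by (auto simp del: upt_Suc simp: less_Suc_eq_le)
    then have "g i \<in> z"
      using mcs_conjE[OF relpow_mcs[OF z(1) y] z(2)[unfolded c_def]] by blast
    then show False
      using relpow_imp_dia_iter[OF z(1)] g by blast
  qed
  then obtain i where "\<And>\<psi>. kfm n k \<psi> \<Longrightarrow> \<psi> \<in> w \<Longrightarrow> dia_iter n i \<psi> \<in> y"
    by blast
  then have "(y, w) \<in> R ^^ i"
    by (rule relpow_if_dia_iter[OF y w])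
  then show ?thesis
    by (rule relpow_imp_rtrancl)
qed

lemma dia_le_rtrancl_pullback:
  assumes ab: "(a, b) \<in> R\<^sup>*" and a: "mcs a" and d: "dia_le n m \<psi> \<in> b"
  shows "dia_le n m \<psi> \<in> a"
proof -
  have b: "mcs b"
    using rtrancl_mcs[OF ab a] .
  then obtain i where "dia_iter n i \<psi> \<in> b"
    using d by (rule mcs_dia_leE)
  then obtain z where "(b, z) \<in> R ^^ i" "\<psi> \<in> z"
    by (rule dia_iter_imp_relpow[OF b])
  then have "(a, z) \<in> R\<^sup>*"
    using ab by (blast intro: rtrancl_trans relpow_imp_rtrancl)
  then show ?thesis
    using a \<open>\<psi> \<in> z\<close> by (rule rtrancl_imp_dia_le)
qed

lemma canR_chain_has_upper_bound:
  assumes ne: "C \<noteq> {}" and C: "C \<subseteq> canW n L k"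
    and chain: "\<forall>a\<in>C. \<forall>b\<in>C. (a, b) \<in> R\<^sup>* \<or> (b, a) \<in> R\<^sup>*"
  shows "\<exists>w\<in>canW n L k. \<forall>c\<in>C. (c, w) \<in> R\<^sup>*"
proof -
  define refuted where "refuted c = {Neg \<psi> | \<psi>. kfm n k \<psi> \<and> dia_le n m \<psi> \<notin> c}" for c
  have mcs_C: "mcs c" if "c \<in> C" for c
    using C that by (auto simp: canW_def)
  have refuted_mono: "refuted c \<subseteq> refuted d" if "c \<in> C" "(c, d) \<in> R\<^sup>*" for c d
    using dia_le_rtrancl_pullback[OF that(2) mcs_C[OF that(1)]] by (auto simp: refuted_def)
  have refuted_in: "refuted c \<subseteq> c" if "c \<in> C" for c
    using mcs_C[OF that] mcs_dia_leI[OF mcs_C[OF that], of _ 0] mcs_Neg_if_not_mem[OF mcs_C[OF that]]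
    by (auto simp: refuted_def)
  have "refuted c \<subseteq> refuted d \<or> refuted d \<subseteq> refuted c" if "c \<in> C" "d \<in> C" for c d
    using chain refuted_mono that by blast
  then have "subset.chain UNIV (refuted ` C)"
    by (auto simp: subset_chain_def)
  moreover have "\<forall>X\<in>refuted ` C. L_consistent L X"
    using refuted_in mcs_not_refutable[OF mcs_C] unfolding L_consistent_def by (blast dest: subset_trans)
  ultimately have "L_consistent L (\<Union>(refuted ` C))"
    using ne by (intro L_consistent_Union_chain) auto
  moreover have "\<Union>(refuted ` C) \<subseteq> {a. kfm n k a}"
    by (auto simp: refuted_def)
  ultimately obtain w where w: "mcs w" "\<Union>(refuted ` C) \<subseteq> w"
    by (rule lindenbaum)
  have "(c, w) \<in> R\<^sup>*" if c: "c \<in> C" for c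
  proof (rule rtrancl_if_dia_le[OF mcs_C[OF c] w(1)])
    fix \<psi> assume "kfm n k \<psi>" "\<psi> \<in> w"
    then show "dia_le n m \<psi> \<in> c"
      using w c mcs_not_mem_Neg[OF w(1)] by (auto simp: refuted_def)
  qed
  then show ?thesis
    using w(1) by (auto simp: canW_def)
qed

end

theorem proposition4p2:
  fixes n :: nat and L :: "fm set" and k :: enat
  assumes "normal_logic n L"
    and "consistent_logic L"
    and "pretransitive n L"
  shows "heavy 1 (canW n L k) (canR n L k)"
proof -
  obtain m where "Imp (dia_iter n (Suc m) (Var 0)) (dia_le n m (Var 0)) \<in> L"
    using assms(3) unfolding pretransitive_def by blast
  then interpret pretransitive_canonical_frame n L k m
    using assms(1) by unfold_locales
  let ?W = "canW n L k"
  show ?thesis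
    unfolding heavy_def
  proof (intro ballI impI)
    fix x assume x: "x \<in> ?W"
    obtain y where xy: "(x, y) \<in> R\<^sup>*" and final: "\<And>z. (y, z) \<in> R\<^sup>* \<Longrightarrow> (z, y) \<in> R\<^sup>*"
      using exists_rtrancl_final_successor[OF canR_subset_canW x canR_chain_has_upper_bound] by blast
    have y: "y \<in> ?W"
      using xy rtrancl_mcs x by (auto simp: canW_def)
    have "\<And>z. (y, z) \<in> rstar ?W R \<Longrightarrow> (z, y) \<in> rstar ?W R"
      using final y unfolding rstar_eq[OF canR_subset_canW] by blast
    with y have "depth ?W R y = enat 1"
      by (rule depth_eq_1_if_final)
    then show "\<exists>y. (x, y) \<in> rstar ?W R \<and> depth ?W R y = enat 1"
      using xy x y by (auto simp: rstar_eq[OF canR_subset_canW])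
  qed
qed

end
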